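(* Let $(P,A,\lambda)$ be a marked poset and let $x\in\mathcal{O}_{P,A}(\lambda)$. Then $x$ is a vertex of the marked order polytope $\mathcal{O}_{P,A}(\lambda)$ if and only if every connected component of the identity diagram $\mathcal{D}^\lambda_{P,A}(x)$ contains an element of $A$.
   Context: A marked poset $(P,A,\lambda)$ consists of a finite poset $P$, a subset $A\subseteq P$ containing all minimal and all maximal elements of $P$, and a vector $\lambda=(\lambda_a)_{a\in A}\in\mathbb{R}^A$ with $\lambda_a\le\lambda_b$ whenever $a\le b$. The marked order polytope is $\mathcal{O}_{P,A}(\lambda)=\{x\in\mathbb{R}^{P\setminus A}: x_p\le x_q \text{ for } p\le q;\ \lambda_a\le x_p \text{ for } a\le p;\ x_p\le\lambda_b \text{ for } p\le b\}$. For $x\in\mathcal{O}_{P,A}(\lambda)$ put $v(p)=x_p$ if $p\notin A$ and $v(p)=\lambda_p$ if $p\in A$. The identity diagram $\mathcal{D}^\lambda_{P,A}(x)$ contains the Hasse diagram of $P$ (an arrow $p\to q$ whenever $q$ covers $p$), and additionally a reverse arrow $q\to p$ whenever $p\to q$ is a Hasse arrow, $p,q$ are not both in $A$, and $v(p)=v(q)$. A set of nodes is connected if any two of its nodes are joined by a (possibly empty) chain of double arrows $p\rightleftarrows p_1\rightleftarrows\cdots\rightleftarrows p_t\rightleftarrows q$ within the set; connected components are the maximal connected subsets. *)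

theory Defs
  imports "HOL-Analysis.Analysis"
begin

text \<open>A finite poset is modelled as a finite type 'p (the ground set is UNIV) with
  an order relation le.\<close>

definition marked_poset :: "('p::finite \<Rightarrow> 'p \<Rightarrow> bool) \<Rightarrow> 'p set \<Rightarrow> ('p \<Rightarrow> real) \<Rightarrow> bool" where
  "marked_poset le A lam \<longleftrightarrow>
     (\<forall>p. le p p) \<and> (\<forall>p q. le p q \<longrightarrow> le q p \<longrightarrow> p = q) \<and>
     (\<forall>p q r. le p q \<longrightarrow> le q r \<longrightarrow> le p r) \<and>
     (\<forall>p. (\<forall>q. le q p \<longrightarrow> q = p) \<longrightarrow> p \<in> A) \<and>
     (\<forall>p. (\<forall>q. le p q \<longrightarrow> q = p) \<longrightarrow> p \<in> A) \<and>
     (\<forall>a\<in>A. \<forall>b\<in>A. le a b \<longrightarrow> lam a \<le> lam b)"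

text \<open>The marked order polytope, embedded in real^'p: the coordinates indexed by A are
  frozen to the marking lam, the remaining coordinates are the coordinates of R^(P - A).
  Then the coordinate function is exactly the function v of the paper.\<close>

definition marked_order_polytope ::
  "('p::finite \<Rightarrow> 'p \<Rightarrow> bool) \<Rightarrow> 'p set \<Rightarrow> ('p \<Rightarrow> real) \<Rightarrow> (real ^ 'p) set" where
  "marked_order_polytope le A lam =
     {x. (\<forall>a\<in>A. x $ a = lam a) \<and>
         (\<forall>p q. p \<notin> A \<longrightarrow> q \<notin> A \<longrightarrow> le p q \<longrightarrow> x $ p \<le> x $ q) \<and>
         (\<forall>a p. a \<in> A \<longrightarrow> p \<notin> A \<longrightarrow> le a p \<longrightarrow> lam a \<le> x $ p) \<and>
         (\<forall>p b. p \<notin> A \<longrightarrow> b \<in> A \<longrightarrow> le p b \<longrightarrow> x $ p \<le> lam b)}"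

definition covers :: "('p \<Rightarrow> 'p \<Rightarrow> bool) \<Rightarrow> 'p \<Rightarrow> 'p \<Rightarrow> bool" where
  "covers le p q \<longleftrightarrow> le p q \<and> p \<noteq> q \<and> \<not> (\<exists>r. le p r \<and> le r q \<and> r \<noteq> p \<and> r \<noteq> q)"

definition diagram_arrow ::
  "('p::finite \<Rightarrow> 'p \<Rightarrow> bool) \<Rightarrow> 'p set \<Rightarrow> real ^ 'p \<Rightarrow> 'p \<Rightarrow> 'p \<Rightarrow> bool" where
  "diagram_arrow le A x p q \<longleftrightarrow>
     covers le p q \<or> (covers le q p \<and> \<not> (p \<in> A \<and> q \<in> A) \<and> x $ p = x $ q)"

definition double_arrow ::
  "('p::finite \<Rightarrow> 'p \<Rightarrow> bool) \<Rightarrow> 'p set \<Rightarrow> real ^ 'p \<Rightarrow> 'p \<Rightarrow> 'p \<Rightarrow> bool" where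
  "double_arrow le A x p q \<longleftrightarrow> diagram_arrow le A x p q \<and> diagram_arrow le A x q p"

definition diagram_connected ::
  "('p::finite \<Rightarrow> 'p \<Rightarrow> bool) \<Rightarrow> 'p set \<Rightarrow> real ^ 'p \<Rightarrow> 'p set \<Rightarrow> bool" where
  "diagram_connected le A x S \<longleftrightarrow>
     (\<forall>p\<in>S. \<forall>q\<in>S. (\<lambda>a b. a \<in> S \<and> b \<in> S \<and> double_arrow le A x a b)\<^sup>*\<^sup>* p q)"

definition diagram_component ::
  "('p::finite \<Rightarrow> 'p \<Rightarrow> bool) \<Rightarrow> 'p set \<Rightarrow> real ^ 'p \<Rightarrow> 'p set \<Rightarrow> bool" where
  "diagram_component le A x S \<longleftrightarrow>
     diagram_connected le A x S \<and>
     (\<forall>T. diagram_connected le A x T \<longrightarrow> S \<subseteq> T \<longrightarrow> T = S)"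

end

theory Submission
  imports Defs
begin

text \<open>If some component C of the identity diagram avoids A, then every comparable pair
  crossing the boundary of C has strictly different values (otherwise the chain of covers
  between them would be a chain of double arrows leaving C), so moving all coordinates in C
  by a small amount in either direction stays in the polytope and x is the midpoint of two
  of its points. Conversely, if x is the midpoint of y and z in the polytope, then y is
  constant along every double arrow, hence on every component; as each component contains
  a marked element, where y agrees with x, we get y = x.\<close>

lemma marked_order_polytope_iff:
  assumes "marked_poset le A lam"
  shows "y \<in> marked_order_polytope le A lam \<longleftrightarrow>
    (\<forall>a\<in>A. y $ a = lam a) \<and> (\<forall>p q. le p q \<longrightarrow> (p \<notin> A \<or> q \<notin> A) \<longrightarrow> y $ p \<le> y $ q)"
  unfolding marked_order_polytope_def by (smt (verit) mem_Collect_eq)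

lemma marked_order_polytope_mono:
  assumes mp: "marked_poset le A lam" and y: "y \<in> marked_order_polytope le A lam"
    and "le p q"
  shows "y $ p \<le> y $ q"
proof (cases "p \<in> A \<and> q \<in> A")
  case True
  then show ?thesis using y mp \<open>le p q\<close> unfolding marked_order_polytope_def marked_poset_def by auto
next
  case False
  then show ?thesis using marked_order_polytope_iff[OF mp] y \<open>le p q\<close> by blast
qed

lemma double_arrow_sym: "double_arrow le A x p q \<Longrightarrow> double_arrow le A x q p"
  unfolding double_arrow_def by blast

lemma double_arrow_iff:
  assumes "marked_poset le A lam"
  shows "double_arrow le A x p q \<longleftrightarrow>
    (covers le p q \<or> covers le q p) \<and> \<not> (p \<in> A \<and> q \<in> A) \<and> x $ p = x $ q"
proof -
  have "\<not> (covers le p q \<and> covers le q p)"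
    using assms unfolding covers_def marked_poset_def by blast
  then show ?thesis unfolding double_arrow_def diagram_arrow_def by auto
qed

lemma rtranclp_covers_if_le_level:
  fixes le :: "'p::finite \<Rightarrow> 'p \<Rightarrow> bool" and v :: "'p \<Rightarrow> 'a::order"
  assumes refl: "\<And>p. le p p" and antisym: "\<And>p q. le p q \<Longrightarrow> le q p \<Longrightarrow> p = q"
    and trans: "\<And>p q r. le p q \<Longrightarrow> le q r \<Longrightarrow> le p r"
    and mono: "\<And>p q. le p q \<Longrightarrow> v p \<le> v q"
  shows "le p q \<Longrightarrow> v p = v q \<Longrightarrow> (\<lambda>a b. covers le a b \<and> v a = v b)\<^sup>*\<^sup>* p q"
proof (induction "card {r. le p r \<and> le r q}" arbitrary: p q rule: less_induct)
  case less
  let ?I = "\<lambda>p q. {r. le p r \<and> le r q}"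
  show ?case
  proof (cases "p = q \<or> covers le p q")
    case True
    then show ?thesis using less.prems by (auto intro: r_into_rtranclp)
  next
    case False
    then obtain r where r: "le p r" "le r q" "r \<noteq> p" "r \<noteq> q"
      using less.prems unfolding covers_def by blast
    have vr: "v p = v r" "v r = v q"
      using mono[OF r(1)] mono[OF r(2)] less.prems(2) by simp_all
    have "?I p r \<subset> ?I p q"
    proof -
      have "?I p r \<subseteq> ?I p q" using trans r(2) by blast
      moreover have "q \<in> ?I p q - ?I p r" using refl antisym less.prems(1) r(2,4) by blast
      ultimately show ?thesis by blast
    qed
    moreover have "?I r q \<subset> ?I p q"
    proof -
      have "?I r q \<subseteq> ?I p q" using trans r(1) by blast
      moreover have "p \<in> ?I p q - ?I r q" using refl antisym less.prems(1) r(1,3) by blast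
      ultimately show ?thesis by blast
    qed
    ultimately have "card (?I p r) < card (?I p q)" "card (?I r q) < card (?I p q)"
      by (simp_all add: psubset_card_mono)
    then show ?thesis
      using less.hyps r(1,2) vr by (meson rtranclp_trans)
  qed
qed


lemma diagram_connected_insert:
  assumes conn: "diagram_connected le A x S" and a: "a \<in> S"
    and ab: "double_arrow le A x a b"
  shows "diagram_connected le A x (insert b S)"
  unfolding diagram_connected_def
proof (intro ballI)
  let ?R = "\<lambda>u w. u \<in> insert b S \<and> w \<in> insert b S \<and> double_arrow le A x u w"
  have within_S: "?R\<^sup>*\<^sup>* u w" if "u \<in> S" "w \<in> S" for u w
    using conn that unfolding diagram_connected_def
    by (blast intro: mono_rtranclp[rule_format, rotated])
  have "?R a b" "?R b a" using a ab double_arrow_sym by auto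
  then have to_a: "?R\<^sup>*\<^sup>* u a" and from_a: "?R\<^sup>*\<^sup>* a u" if "u \<in> insert b S" for u
    using that within_S[OF _ a] within_S[OF a] by auto
  fix u w assume "u \<in> insert b S" "w \<in> insert b S"
  then show "?R\<^sup>*\<^sup>* u w" using to_a from_a by (blast intro: rtranclp_trans)
qed

lemma diagram_component_double_arrow_closed:
  assumes "diagram_component le A x C" "a \<in> C" "double_arrow le A x a b"
  shows "b \<in> C"
  using assms diagram_connected_insert unfolding diagram_component_def by blast

lemma diagram_component_nonempty:
  assumes "diagram_component le A x C"
  shows "C \<noteq> {}"
proof
  assume "C = {}"
  have "diagram_connected le A x {undefined}" unfolding diagram_connected_def by simp
  then show False using assms \<open>C = {}\<close> unfolding diagram_component_def by blast
qed

lemma diagram_component_of: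
  "diagram_component le A x {q. (double_arrow le A x)\<^sup>*\<^sup>* p q}"
proof -
  define C where "C = {q. (double_arrow le A x)\<^sup>*\<^sup>* p q}"
  let ?R = "\<lambda>a b. a \<in> C \<and> b \<in> C \<and> double_arrow le A x a b"
  have from_p: "?R\<^sup>*\<^sup>* p q" if "q \<in> C" for q
  proof -
    have "(double_arrow le A x)\<^sup>*\<^sup>* p q" using that C_def by simp
    then show ?thesis
    proof (induction rule: rtranclp_induct)
      case (step y z)
      then have "?R y z" unfolding C_def by auto
      then show ?case by (rule rtranclp.rtrancl_into_rtrancl[OF step.IH])
    qed simp
  qed
  have "symp ?R" unfolding symp_def using double_arrow_sym by blast
  then have to_p: "?R\<^sup>*\<^sup>* q p" if "q \<in> C" for q
    using from_p[OF that] by (rule sympD[OF symp_rtranclp])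
  have conn: "diagram_connected le A x C"
    unfolding diagram_connected_def using to_p from_p by (blast intro: rtranclp_trans)
  have "T \<subseteq> C" if T: "diagram_connected le A x T" "C \<subseteq> T" for T
  proof
    fix t assume "t \<in> T"
    moreover have "p \<in> T" using T C_def by auto
    ultimately have "(\<lambda>a b. a \<in> T \<and> b \<in> T \<and> double_arrow le A x a b)\<^sup>*\<^sup>* p t"
      using T unfolding diagram_connected_def by blast
    then show "t \<in> C" unfolding C_def by (blast intro: mono_rtranclp[rule_format, rotated])
  qed
  then show ?thesis using conn unfolding diagram_component_def C_def by blast
qed


lemma unmarked_component_level_closed:
  assumes mp: "marked_poset le A lam" and xP: "x \<in> marked_order_polytope le A lam"
    and comp: "diagram_component le A x C" and CA: "C \<inter> A = {}"
    and "p \<in> C" and "le p q \<or> le q p" and "x $ p = x $ q"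
  shows "q \<in> C"
proof -
  let ?R = "\<lambda>a b. covers le a b \<and> x $ a = x $ b"
  have po: "\<And>p. le p p" "\<And>p q. le p q \<Longrightarrow> le q p \<Longrightarrow> p = q"
    "\<And>p q r. le p q \<Longrightarrow> le q r \<Longrightarrow> le p r"
    using mp unfolding marked_poset_def by blast+
  have chain: "?R\<^sup>*\<^sup>* r s" if "le r s" "x $ r = x $ s" for r s
    by (rule rtranclp_covers_if_le_level[of le "\<lambda>i. x $ i", OF po
          marked_order_polytope_mono[OF mp xP] that])
  have closed: "b \<in> C" if "a \<in> C" "covers le a b \<or> covers le b a" "x $ a = x $ b" for a b
    using that CA double_arrow_iff[OF mp] diagram_component_double_arrow_closed[OF comp]
    by blast
  show ?thesis
    using \<open>le p q \<or> le q p\<close>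
  proof
    assume "le p q"
    then have "?R\<^sup>*\<^sup>* p q" using chain \<open>x $ p = x $ q\<close> by blast
    then show ?thesis
    proof (induction rule: rtranclp_induct)
      case (step a b)
      then show ?case using closed[of a b] by blast
    qed (rule \<open>p \<in> C\<close>)
  next
    assume "le q p"
    then have "?R\<^sup>*\<^sup>* q p" using chain \<open>x $ p = x $ q\<close> by simp
    then show ?thesis
    proof (induction rule: converse_rtranclp_induct)
      case (step a b)
      then show ?case using closed[of b a] by auto
    qed (rule \<open>p \<in> C\<close>)
  qed
qed

lemma marked_order_polytope_shift:
  assumes mp: "marked_poset le A lam" and xP: "x \<in> marked_order_polytope le A lam"
    and CA: "C \<inter> A = {}"
    and gap: "\<And>p q. le p q \<Longrightarrow> (p \<in> C) \<noteq> (q \<in> C) \<Longrightarrow> x $ p < x $ q"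
  obtains eps where "eps > 0" and
    "\<And>s. \<bar>s\<bar> \<le> eps \<Longrightarrow>
       x + s *\<^sub>R (\<chi> i. if i \<in> C then 1 else 0) \<in> marked_order_polytope le A lam"
proof
  define D where "D = (\<lambda>(p, q). x $ q - x $ p) ` {(p, q). le p q \<and> (p \<in> C) \<noteq> (q \<in> C)}"
  define eps where "eps = Min (insert 1 D) / 2"
  have "finite D" unfolding D_def by simp
  moreover have "d > 0" if "d \<in> D" for d using that gap unfolding D_def by auto
  ultimately show "eps > 0" unfolding eps_def by (simp add: Min_gr_iff)
  have gap_eps: "2 * eps \<le> x $ q - x $ p" if "le p q" "(p \<in> C) \<noteq> (q \<in> C)" for p q
  proof -
    have "x $ q - x $ p \<in> D" unfolding D_def using that by (intro image_eqI[where x = "(p, q)"]) auto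
    then have "Min (insert 1 D) \<le> x $ q - x $ p" using \<open>finite D\<close> by (intro Min_le) auto
    then show ?thesis unfolding eps_def by simp
  qed
  fix s :: real assume s: "\<bar>s\<bar> \<le> eps"
  show "x + s *\<^sub>R (\<chi> i. if i \<in> C then 1 else 0) \<in> marked_order_polytope le A lam"
    unfolding marked_order_polytope_iff[OF mp]
  proof (intro conjI allI impI ballI)
    fix a assume "a \<in> A"
    then show "(x + s *\<^sub>R (\<chi> i. if i \<in> C then 1 else 0)) $ a = lam a"
      using CA xP marked_order_polytope_iff[OF mp] by auto
  next
    fix p q assume "le p q"
    then show "(x + s *\<^sub>R (\<chi> i. if i \<in> C then 1 else 0)) $ p
             \<le> (x + s *\<^sub>R (\<chi> i. if i \<in> C then 1 else 0)) $ q"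
      using marked_order_polytope_mono[OF mp xP] gap_eps[of p q] s
      by (cases "(p \<in> C) = (q \<in> C)") (auto simp: abs_le_iff)
  qed
qed

lemma not_extreme_if_unmarked_component:
  assumes mp: "marked_poset le A lam" and xP: "x \<in> marked_order_polytope le A lam"
    and comp: "diagram_component le A x C" and CA: "C \<inter> A = {}"
  shows "\<not> x extreme_point_of marked_order_polytope le A lam"
proof
  assume ext: "x extreme_point_of marked_order_polytope le A lam"
  have "x $ p < x $ q" if "le p q" "(p \<in> C) \<noteq> (q \<in> C)" for p q
  proof -
    have "x $ p \<noteq> x $ q"
    proof
      assume eq: "x $ p = x $ q"
      have "q \<in> C" if "p \<in> C"
        using unmarked_component_level_closed[OF mp xP comp CA that] \<open>le p q\<close> eq by blast
      moreover have "p \<in> C" if "q \<in> C"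
        using unmarked_component_level_closed[OF mp xP comp CA that] \<open>le p q\<close> eq by simp
      ultimately show False using \<open>(p \<in> C) \<noteq> (q \<in> C)\<close> by blast
    qed
    then show ?thesis using marked_order_polytope_mono[OF mp xP \<open>le p q\<close>] by simp
  qed
  then obtain eps where eps: "eps > 0" and
    shift: "\<And>s. \<bar>s\<bar> \<le> eps \<Longrightarrow>
       x + s *\<^sub>R (\<chi> i. if i \<in> C then 1 else 0) \<in> marked_order_polytope le A lam"
    using marked_order_polytope_shift[OF mp xP CA] by blast
  define e :: "real ^ 'a" where "e = (\<chi> i. if i \<in> C then 1 else 0)"
  obtain c where "c \<in> C" using diagram_component_nonempty[OF comp] by blast
  then have "x + eps *\<^sub>R e \<noteq> x + (- eps) *\<^sub>R e"
    using eps by (auto simp: e_def vec_eq_iff)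
  then have "midpoint (x + eps *\<^sub>R e) (x + (- eps) *\<^sub>R e)
      \<in> open_segment (x + eps *\<^sub>R e) (x + (- eps) *\<^sub>R e)"
    by (rule iffD2[OF midpoint_in_open_segment])
  moreover have "midpoint (x + eps *\<^sub>R e) (x + (- eps) *\<^sub>R e) = x"
    by (simp add: midpoint_def vec_eq_iff field_simps)
  moreover have "x + eps *\<^sub>R e \<in> marked_order_polytope le A lam"
    "x + (- eps) *\<^sub>R e \<in> marked_order_polytope le A lam"
    unfolding e_def by (rule shift; use eps in simp)+
  ultimately show False using ext unfolding extreme_point_of_def by metis
qed

lemma convex_combination_le_eq:
  fixes u :: real
  assumes "0 < u" "u < 1" "a \<le> b" "c \<le> d" "(1 - u) * a + u * c = (1 - u) * b + u * d"
  shows "a = b"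
proof -
  have "(1 - u) * (b - a) + u * (d - c) = 0" using assms(5) by (simp add: algebra_simps)
  moreover have "(1 - u) * (b - a) \<ge> 0" "u * (d - c) \<ge> 0" using assms by simp_all
  ultimately have "(1 - u) * (b - a) = 0" by linarith
  then show ?thesis using assms(2) by simp
qed

lemma open_segment_double_arrow_eq:
  assumes mp: "marked_poset le A lam"
    and y: "y \<in> marked_order_polytope le A lam" and z: "z \<in> marked_order_polytope le A lam"
    and u: "0 < u" "u < 1" and x: "x = (1 - u) *\<^sub>R y + u *\<^sub>R z"
    and "double_arrow le A x q r"
  shows "y $ q = y $ r"
proof -
  have cov: "covers le q r \<or> covers le r q" and "x $ q = x $ r"
    using \<open>double_arrow le A x q r\<close> double_arrow_iff[OF mp] by blast+
  then have eq: "(1 - u) * y $ q + u * z $ q = (1 - u) * y $ r + u * z $ r"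
    using x by simp
  from cov have "le q r \<or> le r q" unfolding covers_def by blast
  then show ?thesis
  proof
    assume "le q r"
    then show ?thesis
      using marked_order_polytope_mono[OF mp y] marked_order_polytope_mono[OF mp z]
      by (intro convex_combination_le_eq[OF u _ _ eq])
  next
    assume "le r q"
    then have "y $ r = y $ q"
      using marked_order_polytope_mono[OF mp y] marked_order_polytope_mono[OF mp z]
      by (intro convex_combination_le_eq[OF u _ _ eq[symmetric]])
    then show ?thesis by simp
  qed
qed


lemma extreme_if_components_marked:
  assumes mp: "marked_poset le A lam" and xP: "x \<in> marked_order_polytope le A lam"
    and marked: "\<forall>C. diagram_component le A x C \<longrightarrow> (\<exists>a\<in>A. a \<in> C)"
  shows "x extreme_point_of marked_order_polytope le A lam"
proof -
  have "y = x" if y: "y \<in> marked_order_polytope le A lam"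
    and z: "z \<in> marked_order_polytope le A lam" and "x \<in> open_segment y z" for y z
  proof -
    obtain u where u: "0 < u" "u < 1" and x: "x = (1 - u) *\<^sub>R y + u *\<^sub>R z"
      using \<open>x \<in> open_segment y z\<close> unfolding in_segment by blast
    have "y $ p = x $ p" for p
    proof -
      obtain a where "a \<in> A" and "(double_arrow le A x)\<^sup>*\<^sup>* p a"
        using marked diagram_component_of[of le A x p] by blast
      have arrow: "y $ q = y $ r \<and> x $ q = x $ r" if "double_arrow le A x q r" for q r
        using that open_segment_double_arrow_eq[OF mp y z u x] double_arrow_iff[OF mp] by blast
      from \<open>(double_arrow le A x)\<^sup>*\<^sup>* p a\<close> have "y $ p = y $ a \<and> x $ p = x $ a"
        by (induction rule: converse_rtranclp_induct) (auto dest: arrow)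
      then show ?thesis
        using \<open>a \<in> A\<close> y xP marked_order_polytope_iff[OF mp] by simp
    qed
    then show "y = x" by (simp add: vec_eq_iff)
  qed
  then show ?thesis
    using xP unfolding extreme_point_of_def open_segment_def by blast
qed

theorem theorem2:
  fixes le :: "'p::finite \<Rightarrow> 'p \<Rightarrow> bool" and A :: "'p set" and lam :: "'p \<Rightarrow> real"
    and x :: "real ^ 'p"
  assumes "marked_poset le A lam"
    and "x \<in> marked_order_polytope le A lam"
  shows "x extreme_point_of (marked_order_polytope le A lam) \<longleftrightarrow>
         (\<forall>C. diagram_component le A x C \<longrightarrow> (\<exists>a\<in>A. a \<in> C))"
  using not_extreme_if_unmarked_component[OF assms] extreme_if_components_marked[OF assms]
  by blast

end
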